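(* Let $H=(V,E)$ be a hypergraph whose vertex set $V$ is a partition of $[n]$ into sets of cardinality at least $2$, and let $D=\{\bar i_I\}_{I\in V}$ with $\bar i_I\in I$ for each $I\in V$. Then $\mathrm{MC}^H_\le(D)$ is full-dimensional in $\mathbb{R}^{\mathcal{J}^H_\le(D)}$.
   Context: Let $n$ be a positive integer, $[n]=\{1,\dots,n\}$. A hypergraph $H=(V,E)$ here has as vertex set $V$ a family of pairwise disjoint subsets of $[n]$, each of cardinality at least $2$, and hyperedge set $E$ consisting of subsets $e\subseteq V$ with $|e|\ge 2$. Write $L(V)=\{\{I\}: I\in V\}$. For a nonempty $e\subseteq V$, $\mathcal{J}^e$ denotes the family of sets $J\subseteq \bigcup_{I\in e} I$ with $|J\cap I|=1$ for every $I\in e$. Let $\mathcal{J}^H=\bigcup_{e\in L(V)\cup E}\mathcal{J}^e$. For a vector $v$ indexed by sets, write $v_i=v_{\{i\}}$ and $v(A)=\sum_{i\in A}v_i$. For $D$ as in the claim, $\mathcal{J}^H_\le(D)=\{J\in\mathcal{J}^H: J\subseteq[n]\setminus D\}$ and $\mathrm{MC}^H_\le(D)=\operatorname{conv}\{v\in\{0,1\}^{\mathcal{J}^H_\le(D)}: v(I\setminus D)\le 1\ \forall I\in V;\ v_J=\prod_{i\in J}v_i\ \forall J\in\mathcal{J}^H_\le(D), |J|>1\}$. *)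

theory Defs
  imports Complex_Main
begin

text \<open>Vectors in the space indexed by a finite family S of sets of naturals are
represented as functions nat set => real that vanish outside S.\<close>

definition Jfam :: "nat set set \<Rightarrow> nat set set" where
  "Jfam e = {J. J \<subseteq> \<Union>e \<and> (\<forall>I\<in>e. card (J \<inter> I) = 1)}"

definition JH :: "nat set set \<Rightarrow> nat set set set \<Rightarrow> nat set set" where
  "JH V E = (\<Union>e \<in> {{I} | I. I \<in> V} \<union> E. Jfam e)"

definition JH_le :: "nat \<Rightarrow> nat set set \<Rightarrow> nat set set set \<Rightarrow> nat set \<Rightarrow> nat set set" where
  "JH_le n V E D = {J \<in> JH V E. J \<subseteq> {1..n} - D}"

definition vsum :: "(nat set \<Rightarrow> real) \<Rightarrow> nat set \<Rightarrow> real" where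
  "vsum v A = (\<Sum>i\<in>A. v {i})"

definition MC_points :: "nat \<Rightarrow> nat set set \<Rightarrow> nat set set set \<Rightarrow> nat set \<Rightarrow> (nat set \<Rightarrow> real) set" where
  "MC_points n V E D = {v.
      (\<forall>J. J \<notin> JH_le n V E D \<longrightarrow> v J = 0) \<and>
      (\<forall>J \<in> JH_le n V E D. v J \<in> {0, 1}) \<and>
      (\<forall>I \<in> V. vsum v (I - D) \<le> 1) \<and>
      (\<forall>J \<in> JH_le n V E D. card J > 1 \<longrightarrow> v J = (\<Prod>i\<in>J. v {i}))}"

definition conv_hull_fun :: "('a \<Rightarrow> real) set \<Rightarrow> ('a \<Rightarrow> real) set" where
  "conv_hull_fun X = {v. \<exists>F c. finite F \<and> F \<noteq> {} \<and> F \<subseteq> X \<and> (\<forall>x\<in>F. c x \<ge> 0) \<and>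
       sum c F = 1 \<and> v = (\<lambda>J. \<Sum>x\<in>F. c x * x J)}"

definition aff_hull_fun :: "('a \<Rightarrow> real) set \<Rightarrow> ('a \<Rightarrow> real) set" where
  "aff_hull_fun X = {v. \<exists>F c. finite F \<and> F \<noteq> {} \<and> F \<subseteq> X \<and>
       sum c F = 1 \<and> v = (\<lambda>J. \<Sum>x\<in>F. c x * x J)}"

definition MC_le :: "nat \<Rightarrow> nat set set \<Rightarrow> nat set set set \<Rightarrow> nat set \<Rightarrow> (nat set \<Rightarrow> real) set" where
  "MC_le n V E D = conv_hull_fun (MC_points n V E D)"

definition full_dimensional_in :: "'a set \<Rightarrow> ('a \<Rightarrow> real) set \<Rightarrow> bool" where
  "full_dimensional_in S P \<longleftrightarrow> aff_hull_fun P = {v. \<forall>J. J \<notin> S \<longrightarrow> v J = 0}"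

end

theory Submission
  imports Defs "HOL-Library.Indicator_Function"
begin

text \<open>For every K in S = J_le(D) the 0/1 point with J-entry 1 iff J \<subseteq> K is a point of the
polytope, because K meets every block of V in at most one element. These points and 0 are
triangular with respect to inclusion, so by Moebius inversion every unit vector e_K equals the
K-th point minus the sum of the e_M with M \<subset> K, and the affine hull is all of R^S.\<close>

lemma conv_hull_fun_superset: "X \<subseteq> conv_hull_fun X"
proof
  fix x assume "x \<in> X"
  then show "x \<in> conv_hull_fun X"
    unfolding conv_hull_fun_def by (intro CollectI exI[of _ "{x}"] exI[of _ "\<lambda>_. 1"]) auto
qed

lemma aff_hull_fun_superset: "X \<subseteq> aff_hull_fun X"
proof
  fix x assume "x \<in> X"
  then show "x \<in> aff_hull_fun X"
    unfolding aff_hull_fun_def by (intro CollectI exI[of _ "{x}"] exI[of _ "\<lambda>_. 1"]) auto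
qed

lemma conv_hull_fun_vanishing:
  assumes "\<forall>x\<in>X. x J = 0" and "v \<in> conv_hull_fun X"
  shows "v J = 0"
  using assms unfolding conv_hull_fun_def by (auto intro!: sum.neutral)

lemma aff_hull_fun_vanishing:
  assumes "\<forall>x\<in>X. x J = 0" and "v \<in> aff_hull_fun X"
  shows "v J = 0"
  using assms unfolding aff_hull_fun_def by (auto intro!: sum.neutral)

lemma aff_hull_fun_affine_comb:
  assumes "u \<in> aff_hull_fun X" "w \<in> aff_hull_fun X"
  shows "(\<lambda>J. a * u J + (1 - a) * w J) \<in> aff_hull_fun X"
proof -
  obtain F c where F: "finite F" "F \<noteq> {}" "F \<subseteq> X" "sum c F = 1" "u = (\<lambda>J. \<Sum>x\<in>F. c x * x J)"
    using assms(1) unfolding aff_hull_fun_def by blast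
  obtain G d where G: "finite G" "G \<noteq> {}" "G \<subseteq> X" "sum d G = 1" "w = (\<lambda>J. \<Sum>x\<in>G. d x * x J)"
    using assms(2) unfolding aff_hull_fun_def by blast
  define c' where "c' x = (if x \<in> F then c x else 0)" for x
  define d' where "d' x = (if x \<in> G then d x else 0)" for x
  define e where "e x = a * c' x + (1 - a) * d' x" for x
  have fin: "finite (F \<union> G)" using F G by auto
  have extend_c: "(\<Sum>x\<in>F \<union> G. c' x * f x) = (\<Sum>x\<in>F. c x * f x)" for f :: "_ \<Rightarrow> real"
    using sum.inter_restrict[OF fin, of "\<lambda>x. c x * f x" F]
    by (simp add: Int_absorb2 c'_def if_distrib[of "\<lambda>t. t * f _"] cong: if_cong)
  have extend_d: "(\<Sum>x\<in>F \<union> G. d' x * f x) = (\<Sum>x\<in>G. d x * f x)" for f :: "_ \<Rightarrow> real"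
    using sum.inter_restrict[OF fin, of "\<lambda>x. d x * f x" G]
    by (simp add: Int_absorb2 d'_def if_distrib[of "\<lambda>t. t * f _"] cong: if_cong)
  have e_comb: "(\<Sum>x\<in>F \<union> G. e x * f x)
      = a * (\<Sum>x\<in>F. c x * f x) + (1 - a) * (\<Sum>x\<in>G. d x * f x)" for f :: "_ \<Rightarrow> real"
  proof -
    have "e x * f x = a * (c' x * f x) + (1 - a) * (d' x * f x)" for x
      unfolding e_def by (simp add: algebra_simps)
    then show ?thesis
      unfolding extend_c[symmetric] extend_d[symmetric] by (simp add: sum.distrib sum_distrib_left)
  qed
  have "sum e (F \<union> G) = 1"
    using e_comb[of "\<lambda>_. 1"] F(4) G(4) by simp
  moreover have "(\<lambda>J. a * u J + (1 - a) * w J) = (\<lambda>J. \<Sum>x\<in>F \<union> G. e x * x J)"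
    using e_comb unfolding F(5) G(5) by simp
  ultimately show ?thesis
    unfolding aff_hull_fun_def using fin F G by blast
qed

lemma aff_hull_fun_scale:
  assumes "(\<lambda>_. 0) \<in> aff_hull_fun X" "u \<in> aff_hull_fun X"
  shows "(\<lambda>J. a * u J) \<in> aff_hull_fun X"
  using aff_hull_fun_affine_comb[OF assms(2,1), of a] by simp

lemma aff_hull_fun_add:
  assumes "(\<lambda>_. 0) \<in> aff_hull_fun X" "u \<in> aff_hull_fun X" "w \<in> aff_hull_fun X"
  shows "(\<lambda>J. u J + w J) \<in> aff_hull_fun X"
  using aff_hull_fun_affine_comb[OF aff_hull_fun_scale[OF assms(1,2), of 2]
      aff_hull_fun_scale[OF assms(1,3), of 2], of "1/2"]
  by simp

lemma aff_hull_fun_diff: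
  assumes "(\<lambda>_. 0) \<in> aff_hull_fun X" "u \<in> aff_hull_fun X" "w \<in> aff_hull_fun X"
  shows "(\<lambda>J. u J - w J) \<in> aff_hull_fun X"
  using aff_hull_fun_add[OF assms(1,2) aff_hull_fun_scale[OF assms(1,3), of "-1"]] by simp

lemma aff_hull_fun_sum:
  assumes "(\<lambda>_. 0) \<in> aff_hull_fun X" "finite A" "\<forall>k\<in>A. f k \<in> aff_hull_fun X"
  shows "(\<lambda>J. \<Sum>k\<in>A. f k J) \<in> aff_hull_fun X"
  using assms(2,3) by (induction A rule: finite_induct) (simp_all add: assms(1) aff_hull_fun_add)

lemma indicator_singleton_in_aff_hull_fun:
  fixes S :: "'a set set"
  assumes "finite S" and zero: "(\<lambda>_. 0) \<in> aff_hull_fun X"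
    and down: "\<forall>K\<in>S. indicator {J \<in> S. J \<subseteq> K} \<in> aff_hull_fun X"
    and "K \<in> S"
  shows "indicator {K} \<in> aff_hull_fun X"
  using \<open>K \<in> S\<close>
proof (induction K rule: measure_induct_rule[of "\<lambda>K. card {M \<in> S. M \<subset> K}"])
  case (less K)
  define below where "below = {M \<in> S. M \<subset> K}"
  have "indicator {M} \<in> aff_hull_fun X" if "M \<in> below" for M
  proof (rule less.IH)
    have "{M' \<in> S. M' \<subset> M} \<subset> below"
      using that unfolding below_def by auto
    moreover have "finite below"
      using \<open>finite S\<close> unfolding below_def by simp
    ultimately show "card {M' \<in> S. M' \<subset> M} < card {M \<in> S. M \<subset> K}"
      unfolding below_def by (simp add: psubset_card_mono)
    show "M \<in> S" using that unfolding below_def by simp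
  qed
  then have "(\<lambda>J. \<Sum>M\<in>below. indicator {M} J) \<in> aff_hull_fun X"
    using \<open>finite S\<close> by (intro aff_hull_fun_sum zero) (auto simp: below_def)
  moreover have "indicat_real {K} = (\<lambda>J. indicator {J \<in> S. J \<subseteq> K} J - (\<Sum>M\<in>below. indicator {M} J))"
  proof
    fix J
    have "(\<Sum>M\<in>below. indicat_real {M} J) = (\<Sum>M\<in>below. if M = J then 1 else 0)"
      by (intro sum.cong) auto
    also have "\<dots> = indicator below J"
      using \<open>finite S\<close> by (simp add: below_def)
    finally have sum_below: "(\<Sum>M\<in>below. indicat_real {M} J) = indicator below J" .
    show "indicat_real {K} J = indicator {J \<in> S. J \<subseteq> K} J - (\<Sum>M\<in>below. indicator {M} J)"
      unfolding sum_below using less.prems by (auto simp: indicator_def below_def)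
  qed
  ultimately show ?case
    using aff_hull_fun_diff[OF zero] down less.prems by simp
qed

lemma full_dimensional_in_conv_hull_fun:
  fixes S :: "'a set set"
  assumes "finite S" and "(\<lambda>_. 0) \<in> X"
    and "\<forall>K\<in>S. indicator {J \<in> S. J \<subseteq> K} \<in> X"
    and "\<forall>x\<in>X. \<forall>J. J \<notin> S \<longrightarrow> x J = 0"
  shows "full_dimensional_in S (conv_hull_fun X)"
proof -
  let ?A = "aff_hull_fun (conv_hull_fun X)"
  have X_sub: "X \<subseteq> ?A"
    using conv_hull_fun_superset aff_hull_fun_superset by blast
  have "?A \<subseteq> {v. \<forall>J. J \<notin> S \<longrightarrow> v J = 0}"
  proof (intro subsetI CollectI allI impI)
    fix v J assume "v \<in> ?A" "J \<notin> S"
    then have "\<forall>x\<in>X. x J = 0"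
      using assms(4) by simp
    then have "\<forall>y\<in>conv_hull_fun X. y J = 0"
      using conv_hull_fun_vanishing by metis
    then show "v J = 0"
      using aff_hull_fun_vanishing \<open>v \<in> ?A\<close> by metis
  qed
  moreover have "{v. \<forall>J. J \<notin> S \<longrightarrow> v J = 0} \<subseteq> ?A"
  proof
    fix v :: "'a set \<Rightarrow> real" assume v: "v \<in> {v. \<forall>J. J \<notin> S \<longrightarrow> v J = 0}"
    have zero: "(\<lambda>_. 0) \<in> ?A" using X_sub assms(2) by blast
    have "(\<lambda>J. v K * indicator {K} J) \<in> ?A" if "K \<in> S" for K
    proof (rule aff_hull_fun_scale[OF zero])
      show "indicator {K} \<in> ?A"
        using indicator_singleton_in_aff_hull_fun[OF assms(1) zero _ that] X_sub assms(3)
        by blast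
    qed
    then have "(\<lambda>J. \<Sum>K\<in>S. v K * indicator {K} J) \<in> ?A"
      by (intro aff_hull_fun_sum[OF zero assms(1)] ballI)
    moreover have "v = (\<lambda>J. \<Sum>K\<in>S. v K * indicator {K} J)"
    proof
      fix J
      have "(\<Sum>K\<in>S. v K * indicator {K} J) = (\<Sum>K\<in>S. v K * indicator {J} K)"
        by (simp add: indicator_def eq_commute)
      also have "\<dots> = (\<Sum>K\<in>S \<inter> {J}. v K)"
        using assms(1) by simp
      also have "\<dots> = v J"
        using v by (cases "J \<in> S") auto
      finally show "v J = (\<Sum>K\<in>S. v K * indicator {K} J)" by simp
    qed
    ultimately show "v \<in> ?A" by simp
  qed
  ultimately show ?thesis
    unfolding full_dimensional_in_def by blast
qed

lemma JH_le_subset: "J \<in> JH_le n V E D \<Longrightarrow> J \<subseteq> {1..n} - D"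
  unfolding JH_le_def by simp

lemma finite_JH_le: "finite (JH_le n V E D)"
proof (rule finite_subset)
  show "JH_le n V E D \<subseteq> Pow {1..n}"
    using JH_le_subset by blast
qed simp

lemma singleton_in_JH_le:
  assumes "{1..n} \<subseteq> \<Union>V" "K \<in> JH_le n V E D" "i \<in> K"
  shows "{i} \<in> JH_le n V E D"
proof -
  have i: "i \<in> {1..n} - D" using assms(2,3) JH_le_subset by blast
  then obtain I where "I \<in> V" "i \<in> I" using assms(1) by blast
  then have "{i} \<in> Jfam {I}" unfolding Jfam_def by simp
  with \<open>I \<in> V\<close> have "{i} \<in> JH V E" unfolding JH_def by blast
  with i show ?thesis unfolding JH_le_def by simp
qed

lemma JH_card_Int_le_1:
  assumes "\<forall>I\<in>V. \<forall>I'\<in>V. I \<noteq> I' \<longrightarrow> I \<inter> I' = {}" "\<forall>e\<in>E. e \<subseteq> V"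
    and "K \<in> JH V E" "I \<in> V"
  shows "card (K \<inter> I) \<le> 1"
proof -
  obtain e where e: "e \<in> {{I} | I. I \<in> V} \<union> E" and "K \<in> Jfam e"
    using assms(3) unfolding JH_def by blast
  then have K: "K \<subseteq> \<Union>e" "\<forall>I'\<in>e. card (K \<inter> I') = 1"
    unfolding Jfam_def by simp_all
  have "e \<subseteq> V"
    using e assms(2) by blast
  show ?thesis
  proof (cases "I \<in> e")
    case True
    then show ?thesis using K(2) by simp
  next
    case False
    have "I' \<inter> I = {}" if "I' \<in> e" for I'
    proof -
      have "I' \<in> V" "I' \<noteq> I"
        using that \<open>e \<subseteq> V\<close> False by auto
      then show ?thesis
        using assms(1) \<open>I \<in> V\<close> by simp
    qed
    then have "K \<inter> I = {}" using K(1) by blast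
    then show ?thesis by simp
  qed
qed

lemma zero_in_MC_points: "(\<lambda>_. 0) \<in> MC_points n V E D"
proof -
  have "(0::real) = (\<Prod>i\<in>J. 0)" if "card J > 1" for J :: "nat set"
  proof -
    have "finite J" "J \<noteq> {}"
      using that card_gt_0_iff[of J] by auto
    then show ?thesis by (simp add: card_gt_0_iff)
  qed
  then show ?thesis
    unfolding MC_points_def vsum_def by auto
qed

lemma down_indicator_in_MC_points:
  assumes V: "\<Union>V = {1..n}" "\<forall>I\<in>V. \<forall>I'\<in>V. I \<noteq> I' \<longrightarrow> I \<inter> I' = {}"
    and E: "\<forall>e\<in>E. e \<subseteq> V"
    and K: "K \<in> JH_le n V E D"
  shows "indicator {J \<in> JH_le n V E D. J \<subseteq> K} \<in> MC_points n V E D"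
proof -
  define S where "S = JH_le n V E D"
  define x where "x = indicat_real {J \<in> S. J \<subseteq> K}"
  have x_singleton: "x {i} = indicator K i" if "i \<in> J" "J \<in> S" for i J
    using singleton_in_JH_le[of n V _ E D i] that V(1) K
    unfolding x_def S_def by (auto simp: indicator_def)
  have "x \<in> MC_points n V E D"
    unfolding MC_points_def S_def[symmetric]
  proof (intro CollectI conjI ballI allI impI)
    fix J assume "J \<notin> S"
    then show "x J = 0" by (simp add: x_def)
  next
    fix J show "x J \<in> {0, 1}" by (simp add: x_def indicator_def)
  next
    fix I assume "I \<in> V"
    then have "finite I"
      using V(1) by (metis Union_upper finite_atLeastAtMost finite_subset)
    have "vsum x (I - D) \<le> (\<Sum>i\<in>I - D. indicator K i)"
      unfolding vsum_def x_def by (intro sum_mono) (auto simp: indicator_def)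
    also have "\<dots> = card ((I - D) \<inter> K)"
      using \<open>finite I\<close> by (simp add: indicator_def of_bool_def sum.If_cases)
    also have "\<dots> \<le> card (K \<inter> I)"
      using \<open>finite I\<close> by (intro of_nat_mono card_mono) auto
    also have "\<dots> \<le> 1"
      using JH_card_Int_le_1[OF V(2) E _ \<open>I \<in> V\<close>] K unfolding JH_le_def by simp
    finally show "vsum x (I - D) \<le> 1" .
  next
    fix J assume J: "J \<in> S" "card J > 1"
    then have "finite J"
      by (simp add: card_ge_0_finite)
    have "(\<Prod>i\<in>J. x {i}) = (\<Prod>i\<in>J. indicator K i)"
      using x_singleton[OF _ J(1)] by simp
    also have "\<dots> = x J"
    proof (cases "J \<subseteq> K")
      case True
      then show ?thesis using J(1) by (simp add: x_def subset_iff)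
    next
      case False
      then obtain i where "i \<in> J" "i \<notin> K" by blast
      then have "(\<Prod>i\<in>J. indicat_real K i) = 0"
        using \<open>finite J\<close> by (intro prod_zero bexI[of _ i]) auto
      then show ?thesis using False by (simp add: x_def)
    qed
    finally show "x J = (\<Prod>i\<in>J. x {i})" by simp
  qed
  then show ?thesis
    unfolding x_def S_def .
qed

theorem proposition3p3:
  fixes n :: nat and V :: "nat set set" and E :: "nat set set set" and D :: "nat set"
  assumes "n \<ge> 1"
    and "\<Union>V = {1..n}"
    and "\<forall>I\<in>V. \<forall>I'\<in>V. I \<noteq> I' \<longrightarrow> I \<inter> I' = {}"
    and "\<forall>I\<in>V. card I \<ge> 2"
    and "\<forall>e\<in>E. e \<subseteq> V \<and> card e \<ge> 2"
    and "\<forall>I\<in>V. card (D \<inter> I) = 1"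
    and "D \<subseteq> \<Union>V"
  shows "full_dimensional_in (JH_le n V E D) (MC_le n V E D)"
proof -
  have edges: "\<forall>e\<in>E. e \<subseteq> V"
    using assms(5) by simp
  show ?thesis
    unfolding MC_le_def
  proof (rule full_dimensional_in_conv_hull_fun)
    show "finite (JH_le n V E D)"
      by (rule finite_JH_le)
    show "(\<lambda>_. 0) \<in> MC_points n V E D"
      by (rule zero_in_MC_points)
    show "\<forall>K\<in>JH_le n V E D. indicator {J \<in> JH_le n V E D. J \<subseteq> K} \<in> MC_points n V E D"
      using down_indicator_in_MC_points[OF assms(2,3) edges] by simp
    show "\<forall>x\<in>MC_points n V E D. \<forall>J. J \<notin> JH_le n V E D \<longrightarrow> x J = 0"
      by (simp add: MC_points_def)
  qed
qed

end
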